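(* Consider $T$ rounds in which, in round $1$, each agent $i$ receives her entitlement $e_i$, and in each round $t\ge2$ the allocation $a_t$ is the MMF output for entitlements $e$ and some reported demands $d_{1t},\dots,d_{nt}\ge0$. Let $d^*_{it}\ge0$ be agent $i$'s true demand in round $t$. Then $\sum_{t=1}^T\ell(d^*_t,a_t)\le 1+\sum_{i=1}^n\sum_{t=2}^T(a_{it}-d^*_{it})^++\sum_{i=1}^n\sum_{t=2}^T\mathbf{1}(a_{it}=d_{it})(d^*_{it}-a_{it})^+.$
   Context: A divisible resource of size $1$ is shared by $n$ agents with entitlements $e_i>0$, $\sum_ie_i=1$. MMF$(e,d)$ on reported demands $d_1,\dots,d_n\ge0$: set $r=1$, $E=1$, $S=\{1,\dots,n\}$, $a=0$; process agents $j$ in ascending order of $d_j/e_j$; if $d_j<re_j/E$, set $a_j=d_j$, remove $j$ from $S$, $r\leftarrow r-d_j$, $E\leftarrow E-e_j$ and continue; otherwise set $a_k=re_k/E$ for all $k\in S$ and stop; output $a$. For $d,a\in\mathbb{R}_+^n$: $\ell_{ur}(a)=1-\sum_ia_i$, $\ell_{or}(d,a)=\sum_i(a_i-d_i)^+$, $\ell_{ud}(d,a)=\sum_i(d_i-a_i)^+$, $\ell(d,a)=\min(\ell_{ur}(a)+\ell_{or}(d,a),\ell_{ud}(d,a))$. *)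

theory Defs
  imports Complex_Main
begin

text \<open>Agents are 0..n-1. One step of MMF: process the agent list (in ascending
order of d_j/e_j); r = remaining resource, E = remaining entitlement.\<close>
fun mmf_aux :: "(nat \<Rightarrow> real) \<Rightarrow> (nat \<Rightarrow> real) \<Rightarrow> nat list \<Rightarrow> real \<Rightarrow> real \<Rightarrow> (nat \<Rightarrow> real)" where
  "mmf_aux e d [] r E = (\<lambda>_. 0)"
| "mmf_aux e d (j # js) r E =
     (if d j < r * e j / E
      then (mmf_aux e d js (r - d j) (E - e j))(j := d j)
      else (\<lambda>k. if k \<in> set (j # js) then r * e k / E else 0))"

definition MMF :: "nat \<Rightarrow> (nat \<Rightarrow> real) \<Rightarrow> (nat \<Rightarrow> real) \<Rightarrow> (nat \<Rightarrow> real)" where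
  "MMF n e d = mmf_aux e d (sort_key (\<lambda>j. d j / e j) [0..<n]) 1 1"

definition loss_ur :: "nat \<Rightarrow> (nat \<Rightarrow> real) \<Rightarrow> real" where
  "loss_ur n a = 1 - (\<Sum>i<n. a i)"

definition loss_or :: "nat \<Rightarrow> (nat \<Rightarrow> real) \<Rightarrow> (nat \<Rightarrow> real) \<Rightarrow> real" where
  "loss_or n d a = (\<Sum>i<n. max (a i - d i) 0)"

definition loss_ud :: "nat \<Rightarrow> (nat \<Rightarrow> real) \<Rightarrow> (nat \<Rightarrow> real) \<Rightarrow> real" where
  "loss_ud n d a = (\<Sum>i<n. max (d i - a i) 0)"

definition loss :: "nat \<Rightarrow> (nat \<Rightarrow> real) \<Rightarrow> (nat \<Rightarrow> real) \<Rightarrow> real" where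
  "loss n d a = min (loss_ur n a + loss_or n d a) (loss_ud n d a)"

end

theory Submission
  imports Defs
begin

text \<open>In every MMF round either each agent receives exactly her reported demand, or the whole
resource is handed out. In the first case the loss is at most the under-supply, which then only
occurs at agents with \<open>a\<^sub>i\<^sub>t = d\<^sub>i\<^sub>t\<close>; in the second the unused resource vanishes and the loss is
at most the over-supply. The first round costs at most \<open>1\<close>, since unused plus over-supplied
resource never exceeds the whole resource.\<close>

lemma mmf_aux_satisfies_or_exhausts:
  assumes "distinct js" "\<forall>k\<in>set js. e k > 0" "E = (\<Sum>k\<in>set js. e k)"
  shows "(\<forall>k\<in>set js. mmf_aux e d js r E k = d k) \<or> (\<Sum>k\<in>set js. mmf_aux e d js r E k) = r"
  using assms
proof (induction js arbitrary: r E)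
  case Nil
  then show ?case by simp
next
  case (Cons j js)
  let ?a = "mmf_aux e d js (r - d j) (E - e j)"
  have j_fresh: "j \<notin> set js" and distinct: "distinct js"
    using Cons.prems(1) by auto
  show ?case
  proof (cases "d j < r * e j / E")
    case True
    have "E - e j = (\<Sum>k\<in>set js. e k)"
      using Cons.prems(3) j_fresh by simp
    then have "(\<forall>k\<in>set js. ?a k = d k) \<or> (\<Sum>k\<in>set js. ?a k) = r - d j"
      using Cons.IH distinct Cons.prems(2) by simp
    moreover have "(\<Sum>k\<in>set js. (?a(j := d j)) k) = (\<Sum>k\<in>set js. ?a k)"
      using j_fresh by (intro sum.cong) auto
    ultimately show ?thesis
      using True j_fresh by auto
  next
    case False
    have "E > 0"
      unfolding Cons.prems(3) using Cons.prems(2) by (intro sum_pos) auto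
    have "(\<Sum>k\<in>set (j # js). r * e k / E) = r * E / E"
      using Cons.prems(3) by (simp add: sum_divide_distrib[symmetric] sum_distrib_left)
    also have "\<dots> = r"
      using \<open>E > 0\<close> by simp
    finally show ?thesis
      using False by (intro disjI2) (simp del: sum.insert set_simps)
  qed
qed

lemma MMF_satisfies_or_exhausts:
  assumes "\<forall>i<n. e i > 0" "(\<Sum>i<n. e i) = 1"
  shows "(\<forall>i<n. MMF n e d i = d i) \<or> (\<Sum>i<n. MMF n e d i) = 1"
proof -
  let ?js = "sort_key (\<lambda>j. d j / e j) [0..<n]"
  have js: "set ?js = {..<n}" "distinct ?js"
    by auto
  then have "(\<forall>k\<in>set ?js. mmf_aux e d ?js 1 1 k = d k) \<or> (\<Sum>k\<in>set ?js. mmf_aux e d ?js 1 1 k) = 1"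
    using assms by (intro mmf_aux_satisfies_or_exhausts) auto
  then show ?thesis
    unfolding MMF_def js(1) by auto
qed

lemma loss_le_one:
  assumes "\<forall>i<n. a i \<ge> 0" "\<forall>i<n. ds i \<ge> 0"
  shows "loss n ds a \<le> 1"
proof -
  have "loss_or n ds a \<le> (\<Sum>i<n. a i)"
    unfolding loss_or_def using assms by (intro sum_mono) auto
  then have "loss_ur n a + loss_or n ds a \<le> 1"
    unfolding loss_ur_def by simp
  then show ?thesis
    unfolding loss_def by linarith
qed

lemma loss_le_if_satisfied_or_exhausted:
  assumes "(\<forall>i<n. a i = d i) \<or> (\<Sum>i<n. a i) = 1"
  shows "loss n ds a \<le> loss_or n ds a + (\<Sum>i<n. (if a i = d i then 1 else 0) * max (ds i - a i) 0)"
  using assms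
proof
  assume satisfied: "\<forall>i<n. a i = d i"
  have "loss n ds a \<le> loss_ud n ds a"
    unfolding loss_def by simp
  also have "\<dots> = (\<Sum>i<n. (if a i = d i then 1 else 0) * max (ds i - a i) 0)"
    unfolding loss_ud_def using satisfied by (intro sum.cong) auto
  finally show ?thesis
    using sum_nonneg[of "{..<n}" "\<lambda>i. max (a i - ds i) (0::real)"] by (simp add: loss_or_def)
next
  assume "(\<Sum>i<n. a i) = 1"
  then have "loss n ds a \<le> loss_or n ds a"
    unfolding loss_def loss_ur_def by simp
  moreover have "0 \<le> (\<Sum>i<n. (if a i = d i then 1 else 0) * max (ds i - a i) (0::real))"
    by (intro sum_nonneg) auto
  ultimately show ?thesis
    by simp
qed

theorem lemma2:
  fixes n T :: nat and e :: "nat \<Rightarrow> real"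
    and a d dstar :: "nat \<Rightarrow> nat \<Rightarrow> real"
  assumes e_pos: "\<forall>i<n. e i > 0"
    and e_sum: "(\<Sum>i<n. e i) = 1"
    and d_nonneg: "\<forall>t i. d t i \<ge> 0"
    and dstar_nonneg: "\<forall>t i. dstar t i \<ge> 0"
    and round1: "\<forall>i<n. a 1 i = e i"
    and rounds: "\<forall>t\<in>{2..T}. \<forall>i<n. a t i = MMF n e (d t) i"
  shows "(\<Sum>t=1..T. loss n (dstar t) (a t))
           \<le> 1 + (\<Sum>i<n. \<Sum>t=2..T. max (a t i - dstar t i) 0)
               + (\<Sum>i<n. \<Sum>t=2..T. (if a t i = d t i then 1 else 0) * max (dstar t i - a t i) 0)"
proof -
  have first: "loss n (dstar 1) (a 1) \<le> 1"
    using round1 e_pos dstar_nonneg by (intro loss_le_one) (auto simp: less_imp_le)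
  have "(\<Sum>t=2..T. loss n (dstar t) (a t)) \<le>
      (\<Sum>t=2..T. loss_or n (dstar t) (a t)
        + (\<Sum>i<n. (if a t i = d t i then 1 else 0) * max (dstar t i - a t i) 0))"
  proof (rule sum_mono, rule loss_le_if_satisfied_or_exhausted)
    fix t assume "t \<in> {2..T}"
    then show "(\<forall>i<n. a t i = d t i) \<or> (\<Sum>i<n. a t i) = 1"
      using MMF_satisfies_or_exhausts[OF e_pos e_sum, of "d t"] rounds by simp
  qed
  also have "\<dots> = (\<Sum>i<n. \<Sum>t=2..T. max (a t i - dstar t i) 0)
      + (\<Sum>i<n. \<Sum>t=2..T. (if a t i = d t i then 1 else 0) * max (dstar t i - a t i) 0)"
    by (simp add: loss_or_def sum.distrib sum.swap[of _ "{2..T}"])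
  finally have later: "(\<Sum>t=2..T. loss n (dstar t) (a t)) \<le> \<dots>" .
  show ?thesis
  proof (cases "T = 0")
    case True
    then show ?thesis
      using later by simp
  next
    case False
    then have "{1..T} = insert 1 {2..T}"
      by auto
    then show ?thesis
      using first later by simp
  qed
qed

end
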